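(* The ranges of the classical wave operators satisfy $\mathrm{ran}\,\Lambda^\pm\subseteq\mathscr D(\sqrt\omega)$.
   Context: $d\ge1$, $\mathfrak H=L^2(\mathbb R^d)$. Assumptions: $V:\mathbb R^d\to[0,\infty)$ locally integrable with $V(x)\ge C_0\langle x\rangle^{1+\nu}$ for some $C_0,\nu>0$, $\langle x\rangle=(1+|x|^2)^{1/2}$; $\omega(k)=\sqrt{k^2+m^2}$, $m>0$; $\chi\in C_0^\infty(\mathbb R^d)$. Energy space $\mathscr X=\mathscr D(\sqrt{-\Delta+V})\oplus\mathscr D(\sqrt\omega)$. S-KG system: $i\partial_tu=(-\Delta+V)u+\varphi_\chi u$, $i\partial_tz=\omega z+\omega^{-1/2}\chi\,\widehat{|u|^2}$, with $\varphi_\chi(x)=\int\omega(k)^{-1/2}(e^{ik\cdot x}\chi(k)\bar z(k)+e^{-ik\cdot x}\bar\chi(k)z(k))dk$; it is globally well-posed on $\mathscr X$ with flow $\Phi_t$. The classical wave operators $\Lambda^\pm:\mathscr X\to\mathfrak H$ are $\Lambda^\pm(u_0,z_0)=\mathrm{w\text{-}lim}_{t\to\pm\infty}e^{it\omega}z(t)$ (weak $L^2$ limits, which exist), where $(u(t),z(t))=\Phi_t(u_0,z_0)$. *)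

theory Defs
  imports "HOL-Analysis.Analysis"
begin

text \<open>Functions on R^d are modelled as functions on an arbitrary euclidean_space 'a
  (d = DIM('a)); the Fourier variable k lives in the same space, paired with x by the
  inner product.\<close>

definition jbr :: "'a::euclidean_space \<Rightarrow> real" where
  "jbr x = sqrt (1 + (norm x)\<^sup>2)"

definition omega :: "real \<Rightarrow> 'a::euclidean_space \<Rightarrow> real" where
  "omega m k = sqrt ((norm k)\<^sup>2 + m\<^sup>2)"

definition L2 :: "('a::euclidean_space \<Rightarrow> complex) \<Rightarrow> bool" where
  "L2 f \<longleftrightarrow> f \<in> borel_measurable lborel \<and> integrable lborel (\<lambda>x. (cmod (f x))\<^sup>2)"

definition ip :: "('a::euclidean_space \<Rightarrow> complex) \<Rightarrow> ('a \<Rightarrow> complex) \<Rightarrow> complex" where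
  "ip f g = (LINT x|lborel. cnj (f x) * g x)"

fun iter_partial :: "'a::euclidean_space list \<Rightarrow> ('a \<Rightarrow> complex) \<Rightarrow> 'a \<Rightarrow> complex" where
  "iter_partial [] f = f"
| "iter_partial (b # bs) f = (\<lambda>x. frechet_derivative (iter_partial bs f) (at x) b)"

definition smooth :: "('a::euclidean_space \<Rightarrow> complex) \<Rightarrow> bool" where
  "smooth f \<longleftrightarrow> (\<forall>bs. set bs \<subseteq> Basis \<longrightarrow> (\<forall>x. iter_partial bs f differentiable (at x)))"

definition test_fun :: "('a::euclidean_space \<Rightarrow> complex) \<Rightarrow> bool" where
  "test_fun f \<longleftrightarrow> smooth f \<and> compact (closure {x. f x \<noteq> 0})"

definition partial :: "'a::euclidean_space \<Rightarrow> ('a \<Rightarrow> complex) \<Rightarrow> 'a \<Rightarrow> complex" where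
  "partial b f x = frechet_derivative f (at x) b"

definition weak_deriv :: "'a::euclidean_space \<Rightarrow> ('a \<Rightarrow> complex) \<Rightarrow> ('a \<Rightarrow> complex) \<Rightarrow> bool" where
  "weak_deriv b u g \<longleftrightarrow> (\<forall>\<phi>. test_fun \<phi> \<longrightarrow>
      (LINT x|lborel. u x * partial b \<phi> x) = - (LINT x|lborel. g x * \<phi> x))"

definition wgrad :: "'a::euclidean_space \<Rightarrow> ('a \<Rightarrow> complex) \<Rightarrow> 'a \<Rightarrow> complex" where
  "wgrad b u = (SOME g. L2 g \<and> weak_deriv b u g)"

text \<open>Form domain D(sqrt(-Delta+V)) = {u in H^1 : sqrt V u in L^2}.\<close>
definition domH :: "('a::euclidean_space \<Rightarrow> real) \<Rightarrow> ('a \<Rightarrow> complex) \<Rightarrow> bool" where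
  "domH V u \<longleftrightarrow> L2 u \<and> L2 (\<lambda>x. complex_of_real (sqrt (V x)) * u x)
      \<and> (\<forall>b\<in>Basis. \<exists>g. L2 g \<and> weak_deriv b u g)"

text \<open>D(sqrt omega) (multiplication operator in Fourier space).\<close>
definition domW :: "real \<Rightarrow> ('a::euclidean_space \<Rightarrow> complex) \<Rightarrow> bool" where
  "domW m z \<longleftrightarrow> L2 z \<and> integrable lborel (\<lambda>k. omega m k * (cmod (z k))\<^sup>2)"

definition Xnorm2 :: "('a::euclidean_space \<Rightarrow> real) \<Rightarrow> real \<Rightarrow> ('a \<Rightarrow> complex) \<Rightarrow> ('a \<Rightarrow> complex) \<Rightarrow> real" where
  "Xnorm2 V m u z =
     (LINT x|lborel. (cmod (u x))\<^sup>2)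
   + (\<Sum>b\<in>Basis. LINT x|lborel. (cmod (wgrad b u x))\<^sup>2)
   + (LINT x|lborel. V x * (cmod (u x))\<^sup>2)
   + (LINT k|lborel. omega m k * (cmod (z k))\<^sup>2)"

text \<open>The quadratic form of -Delta+V, sesquilinear: q(phi,u) = <grad phi, grad u> + <V phi, u>.\<close>
definition qform :: "('a::euclidean_space \<Rightarrow> real) \<Rightarrow> ('a \<Rightarrow> complex) \<Rightarrow> ('a \<Rightarrow> complex) \<Rightarrow> complex" where
  "qform V \<phi> u = (\<Sum>b\<in>Basis. LINT x|lborel. cnj (partial b \<phi> x) * wgrad b u x)
      + (LINT x|lborel. complex_of_real (V x) * cnj (\<phi> x) * u x)"

definition fourier :: "('a::euclidean_space \<Rightarrow> complex) \<Rightarrow> 'a \<Rightarrow> complex" where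
  "fourier f k = complex_of_real ((2 * pi) powr (- real DIM('a) / 2))
      * (LINT x|lborel. exp (- \<i> * complex_of_real (k \<bullet> x)) * f x)"

definition phi_chi :: "real \<Rightarrow> ('a::euclidean_space \<Rightarrow> complex) \<Rightarrow> ('a \<Rightarrow> complex) \<Rightarrow> 'a \<Rightarrow> complex" where
  "phi_chi m chi z x = (LINT k|lborel. complex_of_real (omega m k powr (-1/2)) *
      (exp (\<i> * complex_of_real (k \<bullet> x)) * chi k * cnj (z k)
       + exp (- \<i> * complex_of_real (k \<bullet> x)) * cnj (chi k) * z k))"

text \<open>(u,z) is a global solution of the S-KG system in the energy space X:
  continuous R -> X, u solves the Schroedinger equation weakly (in integrated form against
  test functions), z solves the Klein-Gordon equation in Duhamel form.\<close>
definition SKG_solution ::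
  "('a::euclidean_space \<Rightarrow> real) \<Rightarrow> real \<Rightarrow> ('a \<Rightarrow> complex) \<Rightarrow>
   (real \<Rightarrow> 'a \<Rightarrow> complex) \<Rightarrow> (real \<Rightarrow> 'a \<Rightarrow> complex) \<Rightarrow> bool" where
  "SKG_solution V m chi u z \<longleftrightarrow>
     (\<forall>t. domH V (u t) \<and> domW m (z t))
   \<and> (\<forall>t. ((\<lambda>s. Xnorm2 V m (\<lambda>x. u s x - u t x) (\<lambda>k. z s k - z t k)) \<longlongrightarrow> 0) (at t))
   \<and> (\<forall>\<phi> t. test_fun \<phi> \<longrightarrow>
        ip \<phi> (u t) = ip \<phi> (u 0)
          - \<i> * (LBINT s=0..t. qform V \<phi> (u s) + ip \<phi> (\<lambda>x. phi_chi m chi (z s) x * u s x)))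
   \<and> (\<forall>t. AE k in lborel.
        z t k = exp (- \<i> * complex_of_real (t * omega m k)) * z 0 k
          - \<i> * (LBINT s=0..t. exp (- \<i> * complex_of_real ((t - s) * omega m k))
                 * complex_of_real (omega m k powr (-1/2)) * chi k
                 * fourier (\<lambda>x. complex_of_real ((cmod (u s x))\<^sup>2)) k))"

definition weak_L2_tendsto ::
  "(real \<Rightarrow> 'a::euclidean_space \<Rightarrow> complex) \<Rightarrow> ('a \<Rightarrow> complex) \<Rightarrow> real filter \<Rightarrow> bool" where
  "weak_L2_tendsto f g F \<longleftrightarrow> L2 g \<and> (\<forall>h. L2 h \<longrightarrow> ((\<lambda>t. ip h (f t)) \<longlongrightarrow> ip h g) F)"

end

theory Submission
  imports Defs
begin

text \<open>Where \<open>\<chi>\<close> vanishes, the Duhamel formula has no source term, so there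
  \<open>e\<^sup>i\<^sup>t\<^sup>\<omega> z(t) = z(0)\<close> for all \<open>t\<close>, and the weak limit \<open>\<Lambda>\<close> coincides there
  with \<open>z(0) \<in> D(\<surd>\<omega>)\<close>. On the bounded set where \<open>\<chi>\<close> does not vanish, \<open>\<omega>\<close> is bounded,
  so \<open>\<omega>|\<Lambda>|\<^sup>2\<close> is integrable there because \<open>\<Lambda> \<in> L\<^sup>2\<close>.\<close>

lemma borel_measurable_cnj [measurable (raw)]:
  "f \<in> borel_measurable M \<Longrightarrow> (\<lambda>x. cnj (f x :: complex)) \<in> borel_measurable M"
  by (rule borel_measurable_continuous_on[OF continuous_on_cnj[OF continuous_on_id]])

lemma L2_borel_measurable: "L2 f \<Longrightarrow> f \<in> borel_measurable lborel"
  unfolding L2_def by simp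

lemma L2_integrable_norm_square: "L2 f \<Longrightarrow> integrable lborel (\<lambda>x. (cmod (f x))\<^sup>2)"
  unfolding L2_def by simp

lemma L2_diff:
  assumes "L2 f" "L2 g"
  shows "L2 (\<lambda>x. f x - g x)"
  unfolding L2_def
proof
  have [measurable]: "f \<in> borel_measurable lborel" "g \<in> borel_measurable lborel"
    using assms L2_borel_measurable by blast+
  show meas: "(\<lambda>x. f x - g x) \<in> borel_measurable lborel"
    by measurable
  show "integrable lborel (\<lambda>x. (cmod (f x - g x))\<^sup>2)"
  proof (rule Bochner_Integration.integrable_bound)
    show "integrable lborel (\<lambda>x. 2 * (cmod (f x))\<^sup>2 + 2 * (cmod (g x))\<^sup>2)"
      using assms by (simp add: L2_integrable_norm_square)
    have "(cmod (f x - g x))\<^sup>2 \<le> 2 * (cmod (f x))\<^sup>2 + 2 * (cmod (g x))\<^sup>2" for x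
    proof -
      have "(cmod (f x - g x))\<^sup>2 \<le> (cmod (f x) + cmod (g x))\<^sup>2"
        by (simp add: norm_triangle_ineq4 power_mono)
      also have "\<dots> \<le> 2 * (cmod (f x))\<^sup>2 + 2 * (cmod (g x))\<^sup>2"
        using sum_squares_bound[of "cmod (f x)" "cmod (g x)"] by (simp add: power2_sum)
      finally show ?thesis .
    qed
    then show "AE x in lborel. norm ((cmod (f x - g x))\<^sup>2)
        \<le> norm (2 * (cmod (f x))\<^sup>2 + 2 * (cmod (g x))\<^sup>2)"
      by simp
  qed (use meas in measurable)
qed

lemma L2_indicator_mult:
  assumes "S \<in> sets lborel" "L2 f"
  shows "L2 (\<lambda>x. indicator S x * f x)"
  unfolding L2_def
proof
  have [measurable]: "f \<in> borel_measurable lborel"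
    using assms L2_borel_measurable by blast
  show meas: "(\<lambda>x. indicator S x * f x) \<in> borel_measurable lborel"
    using assms(1) by measurable
  show "integrable lborel (\<lambda>x. (cmod (indicator S x * f x))\<^sup>2)"
    by (rule Bochner_Integration.integrable_bound[OF L2_integrable_norm_square[OF assms(2)]])
      (use meas in \<open>auto simp: indicator_def\<close>)
qed

lemma L2_integrable_cnj_mult:
  assumes "L2 f" "L2 g"
  shows "integrable lborel (\<lambda>x. cnj (f x) * g x)"
proof (rule Bochner_Integration.integrable_bound)
  show "integrable lborel (\<lambda>x. (cmod (f x))\<^sup>2 + (cmod (g x))\<^sup>2)"
    using assms by (simp add: L2_integrable_norm_square)
  have [measurable]: "f \<in> borel_measurable lborel" "g \<in> borel_measurable lborel"
    using assms L2_borel_measurable by blast+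
  show "(\<lambda>x. cnj (f x) * g x) \<in> borel_measurable lborel"
    by measurable
  have "cmod (f x) * cmod (g x) \<le> (cmod (f x))\<^sup>2 + (cmod (g x))\<^sup>2" for x
    using sum_squares_bound[of "cmod (f x)" "cmod (g x)"]
      mult_nonneg_nonneg[OF norm_ge_zero norm_ge_zero, of "f x" "g x"] by linarith
  then show "AE x in lborel. norm (cnj (f x) * g x) \<le> norm ((cmod (f x))\<^sup>2 + (cmod (g x))\<^sup>2)"
    by (simp add: norm_mult)
qed

lemma ip_diff_right:
  assumes "L2 h" "L2 f" "L2 g"
  shows "ip h (\<lambda>x. f x - g x) = ip h f - ip h g"
  using L2_integrable_cnj_mult[OF assms(1,2)] L2_integrable_cnj_mult[OF assms(1,3)]
  by (simp add: ip_def right_diff_distrib)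

lemma ip_self: "ip f f = of_real (LINT x|lborel. (cmod (f x))\<^sup>2)"
proof -
  have "cnj (f x) * f x = of_real ((cmod (f x))\<^sup>2)" for x
    by (metis complex_norm_square mult.commute of_real_power)
  then show ?thesis
    unfolding ip_def by (simp only: integral_complex_of_real)
qed

lemma L2_ip_self_eq_0_imp_AE_zero:
  assumes "L2 f" "ip f f = 0"
  shows "AE x in lborel. f x = 0"
proof -
  have "(LINT x|lborel. (cmod (f x))\<^sup>2) = 0"
    using assms(2) by (simp add: ip_self)
  then have "AE x in lborel. (cmod (f x))\<^sup>2 = 0"
    using integral_nonneg_eq_0_iff_AE[OF L2_integrable_norm_square[OF assms(1)]] by simp
  then show ?thesis
    by simp
qed

text \<open>Testing against \<open>1\<^sub>S (\<Lambda> - g)\<close> identifies a weak limit on \<open>S\<close>.\<close>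

lemma weak_L2_tendsto_AE_eq_on:
  assumes lim: "weak_L2_tendsto f \<Lambda> F" and "F \<noteq> bot"
    and S: "S \<in> sets lborel" and g: "L2 g"
    and eq: "\<forall>\<^sub>F t in F. f t \<in> borel_measurable lborel \<and> (AE x in lborel. x \<in> S \<longrightarrow> f t x = g x)"
  shows "AE x in lborel. x \<in> S \<longrightarrow> \<Lambda> x = g x"
proof -
  define h where "h x = indicator S x * (\<Lambda> x - g x)" for x
  have \<Lambda>: "L2 \<Lambda>"
    using lim by (simp add: weak_L2_tendsto_def)
  have h: "L2 h"
    unfolding h_def using S \<Lambda> g by (intro L2_indicator_mult L2_diff)
  have [measurable]: "h \<in> borel_measurable lborel" "g \<in> borel_measurable lborel"
    using h g L2_borel_measurable by blast+
  have "\<forall>\<^sub>F t in F. ip h (f t) = ip h g"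
    using eq
  proof eventually_elim
    case (elim t)
    then have [measurable]: "f t \<in> borel_measurable lborel"
      by blast
    have "AE x in lborel. cnj (h x) * f t x = cnj (h x) * g x"
      using elim[THEN conjunct2] by eventually_elim (simp add: h_def indicator_def)
    then show ?case
      unfolding ip_def by (intro integral_cong_AE) measurable
  qed
  moreover have "((\<lambda>t. ip h (f t)) \<longlongrightarrow> ip h \<Lambda>) F"
    using lim h by (simp add: weak_L2_tendsto_def)
  ultimately have "((\<lambda>t. ip h g) \<longlongrightarrow> ip h \<Lambda>) F"
    by (rule Lim_transform_eventually[rotated])
  then have "ip h \<Lambda> = ip h g"
    by (rule tendsto_const_iff[OF \<open>F \<noteq> bot\<close>, THEN iffD1, symmetric])
  moreover have "ip h (\<lambda>x. \<Lambda> x - g x) = ip h h"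
    unfolding ip_def by (rule Bochner_Integration.integral_cong) (simp_all add: h_def indicator_def)
  ultimately have "ip h h = 0"
    using ip_diff_right[OF h \<Lambda> g] by simp
  then have "AE x in lborel. h x = 0"
    by (rule L2_ip_self_eq_0_imp_AE_zero[OF h])
  then show ?thesis
    by eventually_elim (simp add: h_def indicator_def)
qed

lemma omega_nonneg: "omega m k \<ge> 0"
  unfolding omega_def by simp

lemma omega_le_if_norm_le: "norm k \<le> R \<Longrightarrow> omega m k \<le> sqrt (R\<^sup>2 + m\<^sup>2)"
  unfolding omega_def by (simp add: power_mono)

lemma borel_measurable_exp_omega [measurable]:
  "(\<lambda>k. exp (\<i> * of_real (t * omega m k))) \<in> borel_measurable borel"
  unfolding omega_def by (intro borel_measurable_continuous_onI continuous_intros)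

lemma domW_if_AE_eq_outside_bounded:
  assumes g: "domW m g" and \<Lambda>: "L2 \<Lambda>" and "bounded B"
    and eq: "AE k in lborel. k \<notin> B \<longrightarrow> \<Lambda> k = g k"
  shows "domW m \<Lambda>"
proof -
  obtain R where R: "\<And>k. k \<in> B \<Longrightarrow> norm k \<le> R"
    using \<open>bounded B\<close> by (auto simp: bounded_iff)
  define M where "M = sqrt (R\<^sup>2 + m\<^sup>2)"
  have "integrable lborel (\<lambda>k. omega m k * (cmod (\<Lambda> k))\<^sup>2)"
  proof (rule Bochner_Integration.integrable_bound)
    show "integrable lborel (\<lambda>k. omega m k * (cmod (g k))\<^sup>2 + M * (cmod (\<Lambda> k))\<^sup>2)"
      using g \<Lambda> by (simp add: domW_def L2_integrable_norm_square)
    show "(\<lambda>k. omega m k * (cmod (\<Lambda> k))\<^sup>2) \<in> borel_measurable lborel"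
      using L2_borel_measurable[OF \<Lambda>] unfolding omega_def by measurable
    show "AE k in lborel. norm (omega m k * (cmod (\<Lambda> k))\<^sup>2)
        \<le> norm (omega m k * (cmod (g k))\<^sup>2 + M * (cmod (\<Lambda> k))\<^sup>2)"
      using eq
    proof eventually_elim
      case (elim k)
      have "omega m k * (cmod (\<Lambda> k))\<^sup>2 \<le> omega m k * (cmod (g k))\<^sup>2 + M * (cmod (\<Lambda> k))\<^sup>2"
      proof (cases "k \<in> B")
        case True
        then have "omega m k \<le> M"
          unfolding M_def by (intro omega_le_if_norm_le R)
        then show ?thesis
          by (simp add: mult_right_mono add_increasing omega_nonneg)
      next
        case False
        then show ?thesis
          using elim by (simp add: M_def)
      qed
      then show ?case
        by (simp add: omega_nonneg M_def)
    qed
  qed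
  then show ?thesis
    using \<Lambda> by (simp add: domW_def)
qed

lemma test_fun_continuous: "test_fun f \<Longrightarrow> continuous_on UNIV f"
  unfolding test_fun_def smooth_def
  by (metis continuous_at_imp_continuous_on differentiable_imp_continuous_within
      empty_set empty_subsetI iter_partial.simps(1))

lemma test_fun_bounded_support: "test_fun f \<Longrightarrow> bounded {x. f x \<noteq> 0}"
  unfolding test_fun_def
  by (metis bounded_subset closure_subset compact_imp_bounded)

lemma SKG_solution_domW: "SKG_solution V m chi u z \<Longrightarrow> domW m (z t)"
  unfolding SKG_solution_def by simp

lemma SKG_solution_rotated_eq_initial_off_support:
  assumes "SKG_solution V m chi u z"
  shows "AE k in lborel. chi k = 0 \<longrightarrow> exp (\<i> * of_real (t * omega m k)) * z t k = z 0 k"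
proof -
  have "AE k in lborel.
      z t k = exp (- \<i> * of_real (t * omega m k)) * z 0 k
        - \<i> * (LBINT s=0..t. exp (- \<i> * of_real ((t - s) * omega m k))
               * of_real (omega m k powr (-1/2)) * chi k
               * fourier (\<lambda>x. of_real ((cmod (u s x))\<^sup>2)) k)"
    using assms unfolding SKG_solution_def by blast
  then show ?thesis
    by eventually_elim (simp add: exp_minus_inverse mult.assoc[symmetric] exp_add[symmetric])
qed

theorem corollary4p3:
  fixes V :: "'a::euclidean_space \<Rightarrow> real" and chi :: "'a \<Rightarrow> complex"
    and m C0 \<nu> :: real
    and u z :: "real \<Rightarrow> 'a \<Rightarrow> complex" and \<Lambda> :: "'a \<Rightarrow> complex" and F :: "real filter"
  assumes V_nonneg: "\<forall>x. V x \<ge> 0"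
    and V_meas: "V \<in> borel_measurable lborel"
    and V_locint: "\<forall>K. compact K \<longrightarrow> set_integrable lborel K V"
    and V_growth: "C0 > 0" "\<nu> > 0" "\<forall>x. V x \<ge> C0 * jbr x powr (1 + \<nu>)"
    and m_pos: "m > 0"
    and chi_test: "test_fun chi"
    and sol: "SKG_solution V m chi u z"
    and F: "F = at_top \<or> F = at_bot"
    and lim: "weak_L2_tendsto (\<lambda>t k. exp (\<i> * complex_of_real (t * omega m k)) * z t k) \<Lambda> F"
  shows "domW m \<Lambda>"
proof -
  have z: "domW m (z t)" for t
    using sol by (rule SKG_solution_domW)
  then have [measurable]: "z t \<in> borel_measurable lborel" for t
    using L2_borel_measurable domW_def by blast
  have support: "{k. chi k = 0} \<in> sets lborel"
    using test_fun_continuous[OF chi_test] borel_measurable_continuous_onI by measurable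
  have proper: "F \<noteq> bot"
    using F trivial_limit_at_top_linorder trivial_limit_at_bot_linorder by metis
  have z0: "L2 (z 0)"
    using z domW_def by blast
  have rotated_eq: "\<forall>\<^sub>F t in F. (\<lambda>k. exp (\<i> * of_real (t * omega m k)) * z t k) \<in> borel_measurable lborel
      \<and> (AE k in lborel. k \<in> {k. chi k = 0} \<longrightarrow> exp (\<i> * of_real (t * omega m k)) * z t k = z 0 k)"
  proof (rule always_eventually, intro allI conjI)
    show "(\<lambda>k. exp (\<i> * of_real (t * omega m k)) * z t k) \<in> borel_measurable lborel" for t
      by measurable
  qed (simp only: mem_Collect_eq SKG_solution_rotated_eq_initial_off_support[OF sol])
  have "AE k in lborel. k \<in> {k. chi k = 0} \<longrightarrow> \<Lambda> k = z 0 k"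
    by (rule weak_L2_tendsto_AE_eq_on[OF lim proper support z0 rotated_eq])
  moreover have "L2 \<Lambda>"
    using lim weak_L2_tendsto_def by blast
  ultimately show ?thesis
    using domW_if_AE_eq_outside_bounded[OF z _ test_fun_bounded_support[OF chi_test]] by simp
qed

end
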